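(* Let $G$ be a finite abstract simplicial complex. Then $$\sum_{x \in G} w(x)\, w(U(x)) = w(G).$$
   Context: A finite abstract simplicial complex $G$ is a finite set of non-empty finite sets such that every non-empty subset of an element of $G$ is again in $G$. For $x \in G$, $\dim(x)=|x|-1$ and $w(x)=(-1)^{\dim(x)}$. For a subset $A\subset G$, $w(A)=\sum_{x\in A} w(x)$ (the Euler characteristic of $A$), and in particular $w(G)=\sum_{x\in G}w(x)$. The star of $x\in G$ is $U(x)=\{y \in G : x \subset y\}$. *)

theory Defs
  imports Main
begin

definition simplicial_complex :: "'a set set \<Rightarrow> bool" where
  "simplicial_complex G \<longleftrightarrow> finite G \<and>
     (\<forall>x\<in>G. x \<noteq> {} \<and> finite x \<and> (\<forall>y. y \<noteq> {} \<and> y \<subseteq> x \<longrightarrow> y \<in> G))"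

definition sdim :: "'a set \<Rightarrow> int" where
  "sdim x = int (card x) - 1"

definition w :: "'a set \<Rightarrow> int" where
  "w x = (-1) ^ nat (sdim x)"

definition wset :: "'a set set \<Rightarrow> int" where
  "wset A = (\<Sum>x\<in>A. w x)"

definition star :: "'a set set \<Rightarrow> 'a set \<Rightarrow> 'a set set" where
  "star G x = {y \<in> G. x \<subseteq> y}"

end

theory Submission
  imports Defs
begin

(* Swapping the order of summation turns the left-hand side into the sum over simplices y
   of w(y) times the Euler characteristic of the set of faces of y.  That set is a full
   simplex, the non-empty subsets of y, whose Euler characteristic is 1 because the
   alternating sum over all subsets of a non-empty finite set vanishes. *)

lemma sum_Pow_minus_one_power_card:
  assumes "finite S" "S \<noteq> {}"
  shows "(\<Sum>T\<in>Pow S. (-1::'b::ring_1) ^ card T) = 0"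
proof (rule sum_alternating_cancels)
  show "finite (Pow S)" using assms(1) by simp
  have "{} \<subset> S" using assms(2) by blast
  from card_subsupersets_even_odd[OF assms(1) this]
  show "card {T. T \<in> Pow S \<and> even (card T)} = card {T. T \<in> Pow S \<and> odd (card T)}"
    by simp
qed

lemma w_eq_minus_power_card:
  assumes "card x > 0"
  shows "w x = - ((-1) ^ card x)"
proof -
  obtain n where "card x = Suc n" using assms gr0_conv_Suc by blast
  then show ?thesis unfolding w_def sdim_def by simp
qed

lemma wset_simplex:
  assumes "finite y" "y \<noteq> {}"
  shows "wset (Pow y - {{}}) = 1"
proof -
  have "wset (Pow y - {{}}) = (\<Sum>x\<in>Pow y - {{}}. - ((-1) ^ card x))"
    unfolding wset_def
  proof (rule sum.cong)
    fix x assume "x \<in> Pow y - {{}}"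
    then have "card x > 0" using assms(1) by (auto simp: card_gt_0_iff intro: finite_subset)
    then show "w x = - ((-1) ^ card x)" by (rule w_eq_minus_power_card)
  qed simp
  also have "\<dots> = 1 - (\<Sum>x\<in>Pow y. (-1) ^ card x)"
    using assms(1) by (simp add: sum_negf sum_diff1)
  also have "\<dots> = 1"
    using sum_Pow_minus_one_power_card[OF assms] by simp
  finally show ?thesis .
qed

lemma sum_w_mult_wset_star:
  assumes "finite G"
  shows "(\<Sum>x\<in>G. w x * wset (star G x)) = (\<Sum>y\<in>G. wset {x\<in>G. x \<subseteq> y} * w y)"
proof -
  have "(\<Sum>x\<in>G. w x * wset (star G x)) = (\<Sum>x\<in>G. \<Sum>y | y \<in> G \<and> x \<subseteq> y. w x * w y)"
    unfolding wset_def star_def by (simp add: sum_distrib_left)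
  also have "\<dots> = (\<Sum>y\<in>G. \<Sum>x | x \<in> G \<and> x \<subseteq> y. w x * w y)"
    by (rule sum.swap_restrict[OF assms assms])
  also have "\<dots> = (\<Sum>y\<in>G. wset {x\<in>G. x \<subseteq> y} * w y)"
    unfolding wset_def by (simp add: sum_distrib_right)
  finally show ?thesis .
qed

lemma simplicial_complex_faces:
  assumes "simplicial_complex G" "y \<in> G"
  shows "{x\<in>G. x \<subseteq> y} = Pow y - {{}}"
  using assms unfolding simplicial_complex_def by blast

theorem mainTheorem1:
  fixes G :: "'a set set"
  assumes "simplicial_complex G"
  shows "(\<Sum>x\<in>G. w x * wset (star G x)) = wset G"
proof -
  have "finite G" using assms unfolding simplicial_complex_def by blast
  then have "(\<Sum>x\<in>G. w x * wset (star G x)) = (\<Sum>y\<in>G. wset {x\<in>G. x \<subseteq> y} * w y)"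
    by (rule sum_w_mult_wset_star)
  also have "\<dots> = (\<Sum>y\<in>G. w y)"
  proof (rule sum.cong)
    fix y assume "y \<in> G"
    moreover have "finite y" "y \<noteq> {}"
      using assms \<open>y \<in> G\<close> unfolding simplicial_complex_def by auto
    ultimately show "wset {x\<in>G. x \<subseteq> y} * w y = w y"
      using assms by (simp add: simplicial_complex_faces wset_simplex)
  qed simp
  finally show ?thesis unfolding wset_def .
qed

end
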